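(* Let $G$ be a connected bipartite simple graph with $m$ edges. Then \[ \mathscr{K}_e(G)\ge 2m-\frac32, \] with equality if and only if $G$ is complete bipartite.
   Context: Kemeny's constant of an irreducible finite Markov chain with transition matrix $P$ whose eigenvalues (with multiplicity) are $1=\rho_1,\rho_2,\dots,\rho_N$ (with $1$ simple) is $\mathscr{K}(P)=\sum_{i=2}^{N}\frac{1}{1-\rho_i}$. $\mathscr{K}_e(G)$ is Kemeny's constant of the simple random walk on the arcs of $G$ (ordered pairs $(u,v)$ with $\{u,v\}$ an edge), where from $(u,v)$ one moves to $(v,w)$ with probability $1/\deg(v)$ for each neighbor $w$ of $v$. *)

theory Defs
  imports "HOL-Computational_Algebra.Computational_Algebra" "HOL-Combinatorics.Permutations"
begin

definition char_poly_on :: "'s set \<Rightarrow> ('s \<Rightarrow> 's \<Rightarrow> real) \<Rightarrow> complex poly" where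
  "char_poly_on S P =
     (\<Sum>\<sigma> | \<sigma> permutes S. of_int (sign \<sigma>) *
        (\<Prod>i\<in>S. (if \<sigma> i = i then [:0, 1:] else 0) - [:complex_of_real (P i (\<sigma> i)):]))"

definition eigenvalues_on :: "'s set \<Rightarrow> ('s \<Rightarrow> 's \<Rightarrow> real) \<Rightarrow> complex multiset" where
  "eigenvalues_on S P = proots (char_poly_on S P)"

text \<open>Kemeny's constant: sum of 1/(1-rho) over all eigenvalues except one copy of 1.
  (For a real stochastic matrix this sum is real; we take its real part.)\<close>
definition kemeny :: "'s set \<Rightarrow> ('s \<Rightarrow> 's \<Rightarrow> real) \<Rightarrow> real" where
  "kemeny S P = Re (\<Sum>\<rho>\<in># (eigenvalues_on S P - {#1#}). 1 / (1 - \<rho>))"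

definition simple_graph :: "'a set \<Rightarrow> ('a \<Rightarrow> 'a \<Rightarrow> bool) \<Rightarrow> bool" where
  "simple_graph V E \<longleftrightarrow> finite V \<and> (\<forall>u v. E u v \<longrightarrow> u \<in> V \<and> v \<in> V) \<and>
     (\<forall>u v. E u v \<longrightarrow> E v u) \<and> (\<forall>u. \<not> E u u)"

definition connected_graph :: "'a set \<Rightarrow> ('a \<Rightarrow> 'a \<Rightarrow> bool) \<Rightarrow> bool" where
  "connected_graph V E \<longleftrightarrow> V \<noteq> {} \<and> (\<forall>u\<in>V. \<forall>v\<in>V. E\<^sup>*\<^sup>* u v)"

definition bipartite :: "'a set \<Rightarrow> ('a \<Rightarrow> 'a \<Rightarrow> bool) \<Rightarrow> bool" where
  "bipartite V E \<longleftrightarrow> (\<exists>A B. A \<union> B = V \<and> A \<inter> B = {} \<and>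
     (\<forall>u v. E u v \<longrightarrow> (u \<in> A \<and> v \<in> B) \<or> (u \<in> B \<and> v \<in> A)))"

definition complete_bipartite :: "'a set \<Rightarrow> ('a \<Rightarrow> 'a \<Rightarrow> bool) \<Rightarrow> bool" where
  "complete_bipartite V E \<longleftrightarrow> (\<exists>A B. A \<union> B = V \<and> A \<inter> B = {} \<and> A \<noteq> {} \<and> B \<noteq> {} \<and>
     (\<forall>u\<in>V. \<forall>v\<in>V. E u v \<longleftrightarrow> (u \<in> A \<and> v \<in> B) \<or> (u \<in> B \<and> v \<in> A)))"

definition edges :: "('a \<Rightarrow> 'a \<Rightarrow> bool) \<Rightarrow> 'a set set" where
  "edges E = {{u, v} | u v. E u v}"

definition degree :: "'a set \<Rightarrow> ('a \<Rightarrow> 'a \<Rightarrow> bool) \<Rightarrow> 'a \<Rightarrow> nat" where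
  "degree V E v = card {w \<in> V. E v w}"

definition arcs :: "('a \<Rightarrow> 'a \<Rightarrow> bool) \<Rightarrow> ('a \<times> 'a) set" where
  "arcs E = {(u, v). E u v}"

definition arc_walk :: "'a set \<Rightarrow> ('a \<Rightarrow> 'a \<Rightarrow> bool) \<Rightarrow> ('a \<times> 'a) \<Rightarrow> ('a \<times> 'a) \<Rightarrow> real" where
  "arc_walk V E a b = (if snd a = fst b \<and> E (fst b) (snd b) then 1 / real (degree V E (snd a)) else 0)"

definition kemeny_edge :: "'a set \<Rightarrow> ('a \<Rightarrow> 'a \<Rightarrow> bool) \<Rightarrow> real" where
  "kemeny_edge V E = kemeny (arcs E) (arc_walk V E)"

end

(*
  The transition matrix P of the walk on the 2m arcs is doubly stochastic with zero diagonal,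
  and trace P^2 = T, the sum of 1/(d u * d v) over all arcs (u, v). Row (u, v) of P depends
  only on v, so an eigenfunction for an eigenvalue rho ~= 0 is a function of the head of the
  arc and gives an eigenvector of the vertex walk D^-1 A; hence the spectrum is real and lies
  in [-1, 1]. By the maximum principle on the connected graph, 1 is a simple eigenvalue, and
  -1 is an eigenvalue because G is bipartite.

  Writing 1/(1 - r) = 1 + r + r^2/(1 - r) for the 2m - 1 eigenvalues r other than 1, which sum
  to -1, gives K_e >= 2m - 2 + 1/2, with equality iff all of them lie in {0, -1} and -1 is
  simple, i.e. iff the sum of the squares of all eigenvalues, which is T, equals 2. For
  bipartite G, T >= 2 by Cauchy-Schwarz applied to the biadjacency matrix, with equality iff
  G is complete bipartite.
*)

theory Submission
  imports Defs "Jordan_Normal_Form.Schur_Decomposition"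
begin

section \<open>Spectra of matrices indexed by a finite set\<close>

lemma sum_sign_permutes_relabel:
  fixes f :: "'i \<Rightarrow> 's" and g :: "'s \<Rightarrow> 's \<Rightarrow> 'r::comm_ring_1"
  assumes f: "bij_betw f A B" and A: "finite A"
  shows "(\<Sum>\<sigma> | \<sigma> permutes B. of_int (sign \<sigma>) * (\<Prod>y\<in>B. g y (\<sigma> y)))
       = (\<Sum>p | p permutes A. of_int (sign p) * (\<Prod>x\<in>A. g (f x) (f (p x))))"
proof -
  define f' where "f' = inv_into A f"
  have f': "bij_betw f' B A"
    unfolding f'_def by (rule bij_betw_inv_into[OF f])
  have inv_left: "f' (f x) = x" if "x \<in> A" for x
    unfolding f'_def by (rule bij_betw_inv_into_left[OF f that])
  have inv_right: "f (f' y) = y" if "y \<in> B" for y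
    unfolding f'_def by (rule bij_betw_inv_into_right[OF f that])
  define lift where "lift p = (\<lambda>y. if y \<in> B then f (p (f' y)) else y)" for p
  define lower where "lower \<sigma> = (\<lambda>x. if x \<in> A then f' (\<sigma> (f x)) else x)" for \<sigma>
  have lift: "permutes_bij_finite p A B f f'" if "p permutes A" for p
    using that f inv_left A by unfold_locales
  have lower: "permutes_bij_finite \<sigma> B A f' f" if "\<sigma> permutes B" for \<sigma>
    using that f' inv_right bij_betw_finite[OF f] A by unfold_locales auto
  show ?thesis
  proof (rule sum.reindex_bij_witness[of _ lower lift, symmetric])
    fix p assume "p \<in> {p. p permutes A}"
    then interpret permutes_bij_finite p A B f f' "lift p"
      by (simp_all add: lift lift_def)
    show "lift p \<in> {\<sigma>. \<sigma> permutes B}" using permutes_p' by simp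
    show "lower (lift p) = p"
      using permutes_p bij_betw_apply[OF f]
      by (intro ext) (auto simp: lift_def lower_def inv_left permutes_in_image permutes_not_in)
    have "(\<Prod>y\<in>B. g y (lift p y)) = (\<Prod>x\<in>A. g (f x) (lift p (f x)))"
      by (rule prod.reindex_bij_betw[OF f, symmetric])
    also have "\<dots> = (\<Prod>x\<in>A. g (f x) (f (p x)))"
      by (rule prod.cong) (simp_all add: lift_def bij_betw_apply[OF f] inv_left)
    finally show "of_int (sign (lift p)) * (\<Prod>y\<in>B. g y (lift p y))
        = of_int (sign p) * (\<Prod>x\<in>A. g (f x) (f (p x)))"
      using sign_p' by simp
  next
    fix \<sigma> assume "\<sigma> \<in> {\<sigma>. \<sigma> permutes B}"
    then interpret permutes_bij_finite \<sigma> B A f' f "lower \<sigma>"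
      by (simp_all add: lower lower_def)
    show "lower \<sigma> \<in> {p. p permutes A}" using permutes_p' by simp
    show "lift (lower \<sigma>) = \<sigma>"
      using permutes_p bij_betw_apply[OF f']
      by (intro ext) (auto simp: lift_def lower_def inv_right permutes_in_image permutes_not_in)
  qed
qed

definition mat_on :: "nat \<Rightarrow> (nat \<Rightarrow> 's) \<Rightarrow> ('s \<Rightarrow> 's \<Rightarrow> real) \<Rightarrow> complex mat" where
  "mat_on n f P = mat n n (\<lambda>(i, j). complex_of_real (P (f i) (f j)))"

lemma mat_on_carrier [simp]: "mat_on n f P \<in> carrier_mat n n"
  by (simp add: mat_on_def)

lemma dim_mat_on [simp]: "dim_row (mat_on n f P) = n" "dim_col (mat_on n f P) = n"
  by (simp_all add: mat_on_def)

lemma index_mat_on [simp]: "i < n \<Longrightarrow> j < n \<Longrightarrow> mat_on n f P $$ (i, j) = complex_of_real (P (f i) (f j))"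
  by (simp add: mat_on_def)

lemma char_poly_on_eq_char_poly:
  assumes f: "bij_betw f {0..<n} S"
  shows "char_poly_on S P = char_poly (mat_on n f P)"
proof -
  have inj: "f i = f j \<longleftrightarrow> i = j" if "i < n" "j < n" for i j
    using f that by (auto simp: bij_betw_def inj_on_def)
  have "char_poly (mat_on n f P)
      = (\<Sum>p | p permutes {0..<n}. signof p * (\<Prod>i = 0..<n. char_poly_matrix (mat_on n f P) $$ (i, p i)))"
    unfolding char_poly_def by (rule det_def') (simp add: char_poly_matrix_def)
  also have "\<dots> = (\<Sum>p | p permutes {0..<n}. of_int (sign p) * (\<Prod>i = 0..<n.
      (if f (p i) = f i then [:0, 1:] else 0) - [:complex_of_real (P (f i) (f (p i))):]))"
    by (intro sum.cong refl arg_cong2[where f = "(*)"] prod.cong)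
      (auto simp: char_poly_matrix_def inj permutes_in_image)
  also have "\<dots> = char_poly_on S P"
    unfolding char_poly_on_def by (rule sum_sign_permutes_relabel[OF f, symmetric]) simp
  finally show ?thesis ..
qed

definition mat_trace :: "'a::semiring_0 mat \<Rightarrow> 'a" where
  "mat_trace A = (\<Sum>i = 0..<dim_row A. A $$ (i, i))"

lemma mat_trace_mult_comm:
  fixes A B :: "'a::comm_semiring_0 mat"
  assumes A: "A \<in> carrier_mat n m" and B: "B \<in> carrier_mat m n"
  shows "mat_trace (A * B) = mat_trace (B * A)"
proof -
  have "mat_trace (A * B) = (\<Sum>i = 0..<n. \<Sum>k = 0..<m. A $$ (i, k) * B $$ (k, i))"
    using A B by (simp add: mat_trace_def scalar_prod_def)
  also have "\<dots> = (\<Sum>k = 0..<m. \<Sum>i = 0..<n. B $$ (k, i) * A $$ (i, k))"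
    by (subst sum.swap) (simp add: mult.commute)
  also have "\<dots> = mat_trace (B * A)"
    using A B by (simp add: mat_trace_def scalar_prod_def)
  finally show ?thesis .
qed

lemma mat_trace_similar:
  assumes A: "A \<in> carrier_mat n n" and sim: "similar_mat_wit A B P Q"
  shows "mat_trace A = mat_trace (B :: 'a::comm_ring_1 mat)"
proof -
  from similar_mat_witD2[OF A sim] have QP: "Q * P = 1\<^sub>m n" and APBQ: "A = P * B * Q"
    and B: "B \<in> carrier_mat n n" and P: "P \<in> carrier_mat n n" and Q: "Q \<in> carrier_mat n n"
    by auto
  have "mat_trace A = mat_trace (P * (B * Q))"
    using APBQ P B Q by (simp add: assoc_mult_mat)
  also have "\<dots> = mat_trace (B * Q * P)"
    using P B Q by (simp add: mat_trace_mult_comm[of P n n "B * Q"])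
  also have "B * Q * P = B"
    using P B Q QP by (simp add: assoc_mult_mat[of B n n Q n P n])
  finally show ?thesis .
qed

lemma mat_trace_square_upper_triangular:
  fixes B :: "'a::comm_semiring_1 mat"
  assumes B: "B \<in> carrier_mat n n" and ut: "upper_triangular B"
  shows "mat_trace (B * B) = (\<Sum>i = 0..<n. (B $$ (i, i))\<^sup>2)"
proof -
  have "B $$ (i, k) * B $$ (k, i) = (if k = i then (B $$ (i, i))\<^sup>2 else 0)" if "i < n" "k < n" for i k
    using ut B that unfolding upper_triangular_def
    by (cases k i rule: linorder_cases) (auto simp: power2_eq_square)
  then show ?thesis
    using B by (simp add: mat_trace_def scalar_prod_def)
qed

definition matvec_on ::
    "'s set \<Rightarrow> ('s \<Rightarrow> 's \<Rightarrow> real) \<Rightarrow> ('s \<Rightarrow> complex) \<Rightarrow> 's \<Rightarrow> complex" where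
  "matvec_on S P F x = (\<Sum>y\<in>S. complex_of_real (P x y) * F y)"

lemma row_mat_on_scalar_prod:
  assumes f: "bij_betw f {0..<n} S" and i: "i < n"
    and v: "v \<in> carrier_vec n" and vF: "\<And>j. j < n \<Longrightarrow> vec_index v j = F (f j)"
  shows "row (mat_on n f P) i \<bullet> v = matvec_on S P F (f i)"
proof -
  have "row (mat_on n f P) i \<bullet> v = (\<Sum>j = 0..<n. complex_of_real (P (f i) (f j)) * F (f j))"
    using i v vF by (simp add: scalar_prod_def)
  also have "\<dots> = matvec_on S P F (f i)"
    unfolding matvec_on_def by (rule sum.reindex_bij_betw[OF f])
  finally show ?thesis .
qed

lemma mat_on_mult_mat:
  assumes f: "bij_betw f {0..<n} S" and A: "A \<in> carrier_mat n m" and i: "i < n" and j: "j < m"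
  shows "(mat_on n f P * A) $$ (i, j) = matvec_on S P (\<lambda>y. A $$ (inv_into {0..<n} f y, j)) (f i)"
proof -
  have "inv_into {0..<n} f (f k) = k" if "k < n" for k
    using bij_betw_inv_into_left[OF f] that by simp
  then show ?thesis
    using A i j by (simp add: row_mat_on_scalar_prod[OF f i])
qed

lemma mat_trace_mat_on:
  assumes f: "bij_betw f {0..<n} S"
  shows "mat_trace (mat_on n f P) = complex_of_real (\<Sum>x\<in>S. P x x)"
  using sum.reindex_bij_betw[OF f, of "\<lambda>x. P x x"] by (simp add: mat_trace_def flip: of_real_sum)

lemma mat_trace_mat_on_square:
  assumes f: "bij_betw f {0..<n} S"
  shows "mat_trace (mat_on n f P * mat_on n f P) = complex_of_real (\<Sum>x\<in>S. \<Sum>y\<in>S. P x y * P y x)"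
proof -
  have "(\<Sum>x\<in>S. \<Sum>y\<in>S. P x y * P y x) = (\<Sum>i = 0..<n. \<Sum>j = 0..<n. P (f i) (f j) * P (f j) (f i))"
    by (simp add: sum.reindex_bij_betw[OF f, symmetric])
  then show ?thesis
    by (simp add: mat_trace_def scalar_prod_def)
qed

lemma proots_linear_factors: "proots (\<Prod>a\<leftarrow>as. [:- a, 1:]) = mset (as :: 'a::idom list)"
proof (induction as)
  case (Cons a as)
  have "(\<Prod>a\<leftarrow>as. [:- a, 1:]) \<noteq> 0"
    by (auto simp: prod_list_zero_iff)
  then show ?case
    using Cons.IH by (simp only: list.map prod_list.Cons, subst proots_mult) auto
qed simp

lemma char_poly_mat_on_linear_factors:
  assumes f: "bij_betw f {0..<n} S" and es: "eigenvalues_on S P = mset es"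
  shows "char_poly (mat_on n f P) = (\<Prod>a\<leftarrow>es. [:- a, 1:])" and "length es = n"
proof -
  obtain as where cp: "char_poly (mat_on n f P) = (\<Prod>a\<leftarrow>as. [:- a, 1:])" and "length as = n"
    using char_poly_factorized[OF mat_on_carrier] by blast
  have "mset as = mset es"
    using es cp by (simp add: eigenvalues_on_def char_poly_on_eq_char_poly[OF f] proots_linear_factors)
  then have "(\<Prod>a\<leftarrow>as. [:- a, 1:]) = (\<Prod>a\<leftarrow>es. [:- a, 1:])"
    by (metis mset_map prod_mset_prod_list)
  with cp show "char_poly (mat_on n f P) = (\<Prod>a\<leftarrow>es. [:- a, 1:])"
    by simp
  show "length es = n"
    using \<open>mset as = mset es\<close> \<open>length as = n\<close> by (metis size_mset)
qed

lemma size_eigenvalues_on: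
  assumes "finite S"
  shows "size (eigenvalues_on S P) = card S"
proof -
  obtain f where f: "bij_betw f {0..<card S} S"
    using ex_bij_betw_nat_finite[OF assms] by blast
  obtain es where "eigenvalues_on S P = mset es"
    using ex_mset by metis
  with char_poly_mat_on_linear_factors(2)[OF f this] show ?thesis by simp
qed

lemma eigenvalues_on_schur:
  assumes f: "bij_betw f {0..<n} S" and es: "eigenvalues_on S P = mset es"
  obtains B Q R where "similar_mat_wit (mat_on n f P) B Q R" "upper_triangular B"
    "B \<in> carrier_mat n n" "\<And>i. i < n \<Longrightarrow> B $$ (i, i) = es ! i"
proof -
  obtain B Q R where sd: "schur_decomposition (mat_on n f P) es = (B, Q, R)"
    by (cases "schur_decomposition (mat_on n f P) es") auto
  from schur_decomposition[OF mat_on_carrier char_poly_mat_on_linear_factors(1)[OF f es] sd]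
  have sim: "similar_mat_wit (mat_on n f P) B Q R" and ut: "upper_triangular B" and "diag_mat B = es"
    by auto
  have B: "B \<in> carrier_mat n n"
    using similar_mat_witD2[OF mat_on_carrier sim] by auto
  have diag: "B $$ (i, i) = es ! i" if "i < n" for i
    using \<open>diag_mat B = es\<close> B that by (auto simp: diag_mat_def)
  show ?thesis
    by (rule that[OF sim ut B diag])
qed

lemma sum_eigenvalues_on:
  assumes "finite S"
  shows "sum_mset (eigenvalues_on S P) = complex_of_real (\<Sum>x\<in>S. P x x)"
proof -
  obtain f where f: "bij_betw f {0..<card S} S"
    using ex_bij_betw_nat_finite[OF assms] by blast
  obtain es where es: "eigenvalues_on S P = mset es"
    using ex_mset by metis
  obtain B Q R where sim: "similar_mat_wit (mat_on (card S) f P) B Q R" and "upper_triangular B"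
    and B: "B \<in> carrier_mat (card S) (card S)" and diag: "\<And>i. i < card S \<Longrightarrow> B $$ (i, i) = es ! i"
    using eigenvalues_on_schur[OF f es] by blast
  have "sum_mset (eigenvalues_on S P) = (\<Sum>i = 0..<card S. es ! i)"
    using es char_poly_mat_on_linear_factors(2)[OF f es] by (simp add: sum_mset_sum_list sum_list_sum_nth)
  also have "\<dots> = mat_trace B"
    using B diag by (simp add: mat_trace_def)
  also have "\<dots> = mat_trace (mat_on (card S) f P)"
    by (rule mat_trace_similar[OF mat_on_carrier sim, symmetric])
  finally show ?thesis
    by (simp add: mat_trace_mat_on[OF f])
qed

lemma sum_squares_eigenvalues_on:
  assumes "finite S"
  shows "(\<Sum>\<rho>\<in>#eigenvalues_on S P. \<rho>\<^sup>2) = complex_of_real (\<Sum>x\<in>S. \<Sum>y\<in>S. P x y * P y x)"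
proof -
  obtain f where f: "bij_betw f {0..<card S} S"
    using ex_bij_betw_nat_finite[OF assms] by blast
  let ?M = "mat_on (card S) f P"
  obtain es where es: "eigenvalues_on S P = mset es"
    using ex_mset by metis
  obtain B Q R where sim: "similar_mat_wit ?M B Q R" and ut: "upper_triangular B"
    and B: "B \<in> carrier_mat (card S) (card S)" and diag: "\<And>i. i < card S \<Longrightarrow> B $$ (i, i) = es ! i"
    using eigenvalues_on_schur[OF f es] by blast
  have sim2: "similar_mat_wit (?M * ?M) (B * B) Q R"
    using similar_mat_wit_pow[OF sim, of 2] B by (simp add: numeral_2_eq_2)
  have "(\<Sum>\<rho>\<in>#eigenvalues_on S P. \<rho>\<^sup>2) = (\<Sum>i = 0..<card S. (es ! i)\<^sup>2)"
    using es char_poly_mat_on_linear_factors(2)[OF f es]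
    by (simp add: sum_mset_sum_list sum_list_sum_nth flip: mset_map)
  also have "\<dots> = mat_trace (B * B)"
    using mat_trace_square_upper_triangular[OF B ut] diag by simp
  also have "\<dots> = mat_trace (?M * ?M)"
    by (rule mat_trace_similar[OF mult_carrier_mat[OF mat_on_carrier mat_on_carrier] sim2, symmetric])
  finally show ?thesis
    by (simp add: mat_trace_mat_on_square[OF f])
qed

lemma eigenvalue_mat_on_iff:
  assumes f: "bij_betw f {0..<n} S"
  shows "eigenvalue (mat_on n f P) \<rho> \<longleftrightarrow>
    (\<exists>F. (\<exists>x\<in>S. F x \<noteq> 0) \<and> (\<forall>x\<in>S. matvec_on S P F x = \<rho> * F x))"
proof
  let ?M = "mat_on n f P" and ?g = "inv_into {0..<n} f"
  have g: "?g x < n" "f (?g x) = x" if "x \<in> S" for x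
    using bij_betw_apply[OF bij_betw_inv_into[OF f] that] bij_betw_inv_into_right[OF f that] by auto
  assume "eigenvalue ?M \<rho>"
  then obtain v where v: "v \<in> carrier_vec n" "v \<noteq> 0\<^sub>v n" "?M *\<^sub>v v = \<rho> \<cdot>\<^sub>v v"
    unfolding eigenvalue_def eigenvector_def by auto
  define F where "F y = vec_index v (?g y)" for y
  have vF: "vec_index v i = F (f i)" if "i < n" for i
    using bij_betw_inv_into_left[OF f] that by (simp add: F_def)
  obtain i where i: "i < n" "vec_index v i \<noteq> 0"
    using v(1,2) by (metis carrier_vecD eq_vecI index_zero_vec)
  have "matvec_on S P F x = \<rho> * F x" if "x \<in> S" for x
  proof -
    have "matvec_on S P F x = vec_index (?M *\<^sub>v v) (?g x)"
      using row_mat_on_scalar_prod[OF f g(1)[OF that] v(1) vF] g[OF that] by simp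
    then show ?thesis
      using v(1,3) g(1)[OF that] by (simp add: F_def)
  qed
  then show "\<exists>F. (\<exists>x\<in>S. F x \<noteq> 0) \<and> (\<forall>x\<in>S. matvec_on S P F x = \<rho> * F x)"
    using bij_betw_apply[OF f] i vF by auto
next
  let ?M = "mat_on n f P"
  assume "\<exists>F. (\<exists>x\<in>S. F x \<noteq> 0) \<and> (\<forall>x\<in>S. matvec_on S P F x = \<rho> * F x)"
  then obtain F x0 where x0: "x0 \<in> S" "F x0 \<noteq> 0" and eig: "\<forall>x\<in>S. matvec_on S P F x = \<rho> * F x"
    by blast
  define v where "v = vec n (\<lambda>i. F (f i))"
  have "?M *\<^sub>v v = \<rho> \<cdot>\<^sub>v v"
    by (rule eq_vecI) (simp_all add: v_def row_mat_on_scalar_prod[OF f] eig bij_betw_apply[OF f])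
  moreover have "v \<noteq> 0\<^sub>v n"
    using x0 bij_betw_apply[OF bij_betw_inv_into[OF f]] bij_betw_inv_into_right[OF f]
    by (metis atLeastLessThan_iff index_vec index_zero_vec(1) v_def)
  moreover have "v \<in> carrier_vec n"
    by (simp add: v_def)
  ultimately show "eigenvalue ?M \<rho>"
    unfolding eigenvalue_def eigenvector_def by auto
qed

lemma in_eigenvalues_on_iff:
  assumes "finite S"
  shows "\<rho> \<in># eigenvalues_on S P \<longleftrightarrow>
    (\<exists>F. (\<exists>x\<in>S. F x \<noteq> 0) \<and> (\<forall>x\<in>S. matvec_on S P F x = \<rho> * F x))"
proof -
  obtain f and n :: nat where f: "bij_betw f {0..<n} S"
    using ex_bij_betw_nat_finite[OF assms] by metis
  have "char_poly (mat_on n f P) \<noteq> 0"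
    using degree_monic_char_poly[OF mat_on_carrier, of n f P] by auto
  then show ?thesis
    by (simp add: eigenvalues_on_def char_poly_on_eq_char_poly[OF f] eigenvalue_mat_on_iff[OF f]
        eigenvalue_root_char_poly[OF mat_on_carrier, symmetric])
qed

lemma left_inverse_columns_independent:
  fixes P Q :: "'a::comm_ring_1 mat"
  assumes QP: "Q * P = 1\<^sub>m n" and Q: "Q \<in> carrier_mat n n" and P: "P \<in> carrier_mat n n"
    and j: "j < n" "j' < n" "j \<noteq> j'"
    and comb: "\<And>k. k < n \<Longrightarrow> c * P $$ (k, j) + d * P $$ (k, j') = 0"
  shows "c = 0"
proof -
  have "c = c * (Q * P) $$ (j, j) + d * (Q * P) $$ (j, j')"
    using QP j by simp
  also have "\<dots> = (\<Sum>k = 0..<n. Q $$ (j, k) * (c * P $$ (k, j) + d * P $$ (k, j')))"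
    using Q P j by (simp add: scalar_prod_def sum_distrib_left sum.distrib algebra_simps)
  also have "\<dots> = 0"
    using comb by simp
  finally show ?thesis .
qed

lemma upper_triangular_mult_first_columns:
  assumes A: "A \<in> carrier_mat m n" and B: "B \<in> carrier_mat n n" and ut: "upper_triangular B"
    and i: "i < m" and n: "1 < n"
  shows "(A * B) $$ (i, 0) = A $$ (i, 0) * B $$ (0, 0)"
    and "(A * B) $$ (i, 1) = A $$ (i, 0) * B $$ (0, 1) + A $$ (i, 1) * B $$ (1, 1)"
proof -
  have low: "B $$ (k, j) = 0" if "k < n" "j < k" for j k
    using ut B that unfolding upper_triangular_def by auto
  have "(A * B) $$ (i, j) = (\<Sum>k\<in>{0..<n}. A $$ (i, k) * B $$ (k, j))" if "j < n" for j
    using A B i that by (simp add: scalar_prod_def)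
  also have "\<dots> j = (\<Sum>k\<in>{0, 1}. A $$ (i, k) * B $$ (k, j))" if "j \<le> 1" for j
    using n that by (intro sum.mono_neutral_right) (auto simp: low)
  finally show "(A * B) $$ (i, 0) = A $$ (i, 0) * B $$ (0, 0)"
    and "(A * B) $$ (i, 1) = A $$ (i, 0) * B $$ (0, 1) + A $$ (i, 1) * B $$ (1, 1)"
    using n by (simp_all add: low)
qed

lemma count_ge_2_obtain_mset:
  assumes "2 \<le> count M x"
  obtains xs where "M = mset (x # x # xs)"
proof -
  obtain xs where xs: "mset xs = M - {#x, x#}"
    using ex_mset by metis
  have "mset (x # x # xs) = M"
    using assms by (auto simp: xs multiset_eq_iff)
  then show ?thesis
    using that[of xs] by simp
qed

lemma double_eigenvalue_on_chain:
  assumes S: "finite S" and two: "2 \<le> count (eigenvalues_on S P) \<mu>"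
  obtains F G \<beta> where "\<forall>x\<in>S. matvec_on S P F x = \<mu> * F x"
    and "\<forall>x\<in>S. matvec_on S P G x = \<mu> * G x + \<beta> * F x"
    and "\<And>c d. \<forall>x\<in>S. c * F x + d * G x = 0 \<Longrightarrow> c = 0 \<and> d = 0"
proof -
  obtain f and n :: nat where f: "bij_betw f {0..<n} S"
    using ex_bij_betw_nat_finite[OF S] by metis
  let ?M = "mat_on n f P" and ?g = "inv_into {0..<n} f"
  have g: "?g x < n" "f (?g x) = x" if "x \<in> S" for x
    using bij_betw_apply[OF bij_betw_inv_into[OF f] that] bij_betw_inv_into_right[OF f that] by auto
  obtain rest where es: "eigenvalues_on S P = mset (\<mu> # \<mu> # rest)"
    using count_ge_2_obtain_mset[OF two] .
  have n: "1 < n"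
    using char_poly_mat_on_linear_factors(2)[OF f es] by simp
  obtain B Q R where sim: "similar_mat_wit ?M B Q R" and ut: "upper_triangular B"
    and B: "B \<in> carrier_mat n n" and diag: "\<And>i. i < n \<Longrightarrow> B $$ (i, i) = (\<mu> # \<mu> # rest) ! i"
    using eigenvalues_on_schur[OF f es] by blast
  from similar_mat_witD2[OF mat_on_carrier sim] have RQ: "R * Q = 1\<^sub>m n" and MQBR: "?M = Q * B * R"
    and Q: "Q \<in> carrier_mat n n" and R: "R \<in> carrier_mat n n"
    by auto
  have MQ: "?M * Q = Q * B"
    using MQBR Q B R RQ by (simp add: assoc_mult_mat[of _ n n _ n _ n])
  \<comment> \<open>the first two columns of \<open>Q\<close> form a Jordan chain of \<open>?M\<close> for \<open>\<mu>\<close>\<close>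
  define F where "F y = Q $$ (?g y, 0)" for y
  define G where "G y = Q $$ (?g y, 1)" for y
  have col: "matvec_on S P (\<lambda>y. Q $$ (?g y, j)) x = (Q * B) $$ (?g x, j)" if "x \<in> S" "j < n" for x j
    using mat_on_mult_mat[OF f Q g(1)[OF that(1)] that(2), where P = P] g(2)[OF that(1)] MQ by simp
  show ?thesis
  proof (rule that)
    show "\<forall>x\<in>S. matvec_on S P F x = \<mu> * F x"
      using col[of _ 0] n upper_triangular_mult_first_columns(1)[OF Q B ut g(1) n] diag[of 0]
      by (simp add: F_def[abs_def] mult.commute)
    show "\<forall>x\<in>S. matvec_on S P G x = \<mu> * G x + B $$ (0, 1) * F x"
      using col[of _ 1] n upper_triangular_mult_first_columns(2)[OF Q B ut g(1) n] diag[of 1]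
      by (simp add: F_def G_def[abs_def] mult.commute)
    fix c d
    assume comb: "\<forall>x\<in>S. c * F x + d * G x = 0"
    have "c * Q $$ (k, 0) + d * Q $$ (k, 1) = 0" if "k < n" for k
    proof -
      have "f k \<in> S" and "?g (f k) = k"
        using bij_betw_apply[OF f] bij_betw_inv_into_left[OF f] that by auto
      then show ?thesis
        using bspec[OF comb \<open>f k \<in> S\<close>] by (simp add: F_def G_def)
    qed
    then show "c = 0 \<and> d = 0"
      using left_inverse_columns_independent[OF RQ R Q, of 0 1 c d]
        left_inverse_columns_independent[OF RQ R Q, of 1 0 d c] n
      by (simp add: add.commute)
  qed
qed

section \<open>Two elementary inequalities\<close>

lemma sum_mset_nonneg_eq_0_iff:
  fixes f :: "'a \<Rightarrow> 'b::ordered_comm_monoid_add"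
  assumes "\<And>x. x \<in># M \<Longrightarrow> 0 \<le> f x"
  shows "(\<Sum>x\<in>#M. f x) = 0 \<longleftrightarrow> (\<forall>x\<in>#M. f x = 0)"
  using assms
proof (induction M)
  case (add x M)
  have "0 \<le> (\<Sum>x\<in>#M. f x)"
    using sum_mset_mono[of M "\<lambda>_. 0" f] add.prems by simp
  then show ?case
    using add by (simp add: add_nonneg_eq_0_iff)
qed simp

lemma kemeny_term_bounds:
  fixes r :: real
  assumes "-1 \<le> r" "r < 1"
  defines "\<phi> \<equiv> 1 / (1 - r) - 1 - r - (if r = -1 then 1 / 2 else 0)"
    and "\<psi> \<equiv> r\<^sup>2 - (if r = -1 then 1 else 0)"
  shows "0 \<le> \<phi>" and "0 \<le> \<psi>" and "\<phi> = 0 \<longleftrightarrow> \<psi> = 0"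
proof -
  have "0 \<le> \<phi> \<and> 0 \<le> \<psi> \<and> (\<phi> = 0 \<longleftrightarrow> \<psi> = 0)"
  proof (cases "r = -1")
    case False
    then have "\<phi> = r\<^sup>2 / (1 - r)" and "\<psi> = r\<^sup>2"
      using assms by (simp_all add: \<phi>_def \<psi>_def field_simps power2_eq_square)
    then show ?thesis
      using assms by simp
  qed (simp add: \<phi>_def \<psi>_def)
  then show "0 \<le> \<phi>" and "0 \<le> \<psi>" and "\<phi> = 0 \<longleftrightarrow> \<psi> = 0"
    by auto
qed

lemma kemeny_sum_lower_bound:
  fixes R :: "real multiset"
  assumes bounds: "\<And>r. r \<in># R \<Longrightarrow> -1 \<le> r \<and> r \<le> 1" and one: "count R 1 = 1"
    and minus_one: "-1 \<in># R" and sum0: "sum_mset R = 0"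
  shows "real (size R) - 3 / 2 \<le> (\<Sum>r\<in>#R - {#1#}. 1 / (1 - r))"
    and "(\<Sum>r\<in>#R - {#1#}. 1 / (1 - r)) = real (size R) - 3 / 2 \<longleftrightarrow> (\<Sum>r\<in>#R. r\<^sup>2) = 2"
proof -
  define R' where "R' = R - {#1#}"
  have R: "R = add_mset 1 R'"
    using one unfolding R'_def by (simp add: insert_DiffM count_greater_zero_iff[symmetric])
  have R'_bounds: "-1 \<le> r \<and> r < 1" if "r \<in># R'" for r
    using bounds[of r] that one R by (auto simp: less_le count_eq_zero_iff)
  define k where "k = real (count R' (-1))"
  have k: "1 \<le> k"
    using minus_one R by (simp add: k_def Suc_le_eq)
  \<comment> \<open>\<open>1 / (1 - r) = 1 + r + r\<^sup>2 / (1 - r)\<close>, and the last term is \<open>1 / 2\<close> at \<open>r = -1\<close>\<close>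
  define \<phi> where "\<phi> r = 1 / (1 - r) - 1 - r - (if r = -1 then 1 / 2 else 0)" for r :: real
  define \<psi> where "\<psi> r = r\<^sup>2 - (if r = -1 then 1 else 0)" for r :: real
  have pointwise: "0 \<le> \<phi> r \<and> 0 \<le> \<psi> r \<and> (\<phi> r = 0 \<longleftrightarrow> \<psi> r = 0)" if "r \<in># R'" for r
    using kemeny_term_bounds R'_bounds[OF that] unfolding \<phi>_def \<psi>_def by blast
  have "(\<Sum>r\<in>#R'. 1 / (1 - r)) = (\<Sum>r\<in>#R'. \<phi> r + 1 + r + (if r = -1 then 1 / 2 else 0))"
    by (simp add: \<phi>_def)
  also have "\<dots> = (\<Sum>r\<in>#R'. \<phi> r) + real (size R) - 2 + k / 2"
    using sum0 by (simp add: R sum_mset.distrib sum_mset_delta k_def)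
  finally have K: "(\<Sum>r\<in>#R'. 1 / (1 - r)) = (\<Sum>r\<in>#R'. \<phi> r) + real (size R) - 2 + k / 2" .
  have "(\<Sum>r\<in>#R. r\<^sup>2) = 1 + (\<Sum>r\<in>#R'. \<psi> r + (if r = -1 then 1 else 0))"
    by (simp add: R \<psi>_def)
  also have "\<dots> = 1 + (\<Sum>r\<in>#R'. \<psi> r) + k"
    by (simp add: sum_mset.distrib sum_mset_delta k_def)
  finally have Q: "(\<Sum>r\<in>#R. r\<^sup>2) = 1 + (\<Sum>r\<in>#R'. \<psi> r) + k" .
  have \<phi>_nonneg: "0 \<le> (\<Sum>r\<in>#R'. \<phi> r)" and \<psi>_nonneg: "0 \<le> (\<Sum>r\<in>#R'. \<psi> r)"
    using sum_mset_mono[of R' "\<lambda>_. 0" \<phi>] sum_mset_mono[of R' "\<lambda>_. 0" \<psi>] pointwise by auto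
  have "(\<Sum>r\<in>#R'. \<phi> r) = 0 \<longleftrightarrow> (\<Sum>r\<in>#R'. \<psi> r) = 0"
    using pointwise by (simp add: sum_mset_nonneg_eq_0_iff)
  then show "real (size R) - 3 / 2 \<le> (\<Sum>r\<in>#R - {#1#}. 1 / (1 - r))"
    and "(\<Sum>r\<in>#R - {#1#}. 1 / (1 - r)) = real (size R) - 3 / 2 \<longleftrightarrow> (\<Sum>r\<in>#R. r\<^sup>2) = 2"
    using K Q k \<phi>_nonneg \<psi>_nonneg unfolding R'_def[symmetric] by linarith+
qed

lemma zero_one_matrix_deviation_sum:
  fixes a :: "'u \<Rightarrow> 'v \<Rightarrow> real" and r :: "'u \<Rightarrow> real" and c :: "'v \<Rightarrow> real"
  assumes a01: "\<And>u v. a u v = 0 \<or> a u v = 1"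
    and r: "\<And>u. u \<in> A \<Longrightarrow> r u = (\<Sum>v\<in>B. a u v)" "\<And>u. u \<in> A \<Longrightarrow> 0 < r u"
    and c: "\<And>v. v \<in> B \<Longrightarrow> c v = (\<Sum>u\<in>A. a u v)" "\<And>v. v \<in> B \<Longrightarrow> 0 < c v"
    and m: "m = (\<Sum>u\<in>A. r u)" "0 < m"
  shows "(\<Sum>u\<in>A. \<Sum>v\<in>B. (a u v - r u * c v / m)\<^sup>2 / (r u * c v))
    = (\<Sum>u\<in>A. \<Sum>v\<in>B. a u v / (r u * c v)) - 1"
proof -
  have m_a: "m = (\<Sum>u\<in>A. \<Sum>v\<in>B. a u v)"
    using r(1) by (simp add: m)
  have m_c: "m = (\<Sum>v\<in>B. c v)"
    using c(1) by (simp add: m_a sum.swap[of _ A])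
  have "(a u v - r u * c v / m)\<^sup>2 / (r u * c v) = a u v / (r u * c v) - 2 * a u v / m + r u * c v / m\<^sup>2"
    if "u \<in> A" "v \<in> B" for u v
    using r(2)[OF that(1)] c(2)[OF that(2)] m(2) a01[of u v]
    by (auto simp: field_simps power2_eq_square)
  then have "(\<Sum>u\<in>A. \<Sum>v\<in>B. (a u v - r u * c v / m)\<^sup>2 / (r u * c v))
      = (\<Sum>u\<in>A. \<Sum>v\<in>B. a u v / (r u * c v))
        - (\<Sum>u\<in>A. \<Sum>v\<in>B. 2 * a u v / m) + (\<Sum>u\<in>A. \<Sum>v\<in>B. r u * c v / m\<^sup>2)"
    by (simp add: sum.distrib sum_subtractf)
  also have "(\<Sum>u\<in>A. \<Sum>v\<in>B. 2 * a u v / m) = 2 * (\<Sum>u\<in>A. \<Sum>v\<in>B. a u v) / m"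
    by (simp add: sum_divide_distrib sum_distrib_left)
  also have "(\<Sum>u\<in>A. \<Sum>v\<in>B. r u * c v / m\<^sup>2) = (\<Sum>u\<in>A. r u) * (\<Sum>v\<in>B. c v) / m\<^sup>2"
    by (simp add: sum_product sum_divide_distrib)
  finally show ?thesis
    using m(2) by (simp add: m_a[symmetric] m_c[symmetric] m(1)[symmetric] power2_eq_square)
qed

lemma zero_one_matrix_normalized_sum:
  fixes a :: "'u \<Rightarrow> 'v \<Rightarrow> real" and r :: "'u \<Rightarrow> real" and c :: "'v \<Rightarrow> real"
  assumes A: "finite A" "A \<noteq> {}" and B: "finite B"
    and a01: "\<And>u v. a u v = 0 \<or> a u v = 1"
    and r: "\<And>u. u \<in> A \<Longrightarrow> r u = (\<Sum>v\<in>B. a u v)" "\<And>u. u \<in> A \<Longrightarrow> 0 < r u"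
    and c: "\<And>v. v \<in> B \<Longrightarrow> c v = (\<Sum>u\<in>A. a u v)" "\<And>v. v \<in> B \<Longrightarrow> 0 < c v"
  shows "1 \<le> (\<Sum>u\<in>A. \<Sum>v\<in>B. a u v / (r u * c v))"
    and "(\<Sum>u\<in>A. \<Sum>v\<in>B. a u v / (r u * c v)) = 1 \<longleftrightarrow> (\<forall>u\<in>A. \<forall>v\<in>B. a u v = 1)"
proof -
  define m where "m = (\<Sum>u\<in>A. r u)"
  have m: "0 < m"
    using A r(2) by (simp add: m_def sum_pos)
  define D where "D u v = (a u v - r u * c v / m)\<^sup>2 / (r u * c v)" for u v
  have D_sum: "(\<Sum>u\<in>A. \<Sum>v\<in>B. D u v) = (\<Sum>u\<in>A. \<Sum>v\<in>B. a u v / (r u * c v)) - 1"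
    unfolding D_def by (rule zero_one_matrix_deviation_sum[OF a01 r c m_def m])
  have D_nonneg: "0 \<le> D u v" if "u \<in> A" "v \<in> B" for u v
    using r(2)[OF that(1)] c(2)[OF that(2)] by (simp add: D_def)
  then show "1 \<le> (\<Sum>u\<in>A. \<Sum>v\<in>B. a u v / (r u * c v))"
    using D_sum sum_nonneg[of A "\<lambda>u. \<Sum>v\<in>B. D u v"] by (simp add: sum_nonneg)
  have "(\<Sum>u\<in>A. \<Sum>v\<in>B. a u v / (r u * c v)) = 1 \<longleftrightarrow> (\<Sum>u\<in>A. \<Sum>v\<in>B. D u v) = 0"
    using D_sum by simp
  also have "\<dots> \<longleftrightarrow> (\<forall>u\<in>A. (\<Sum>v\<in>B. D u v) = 0)"
    by (rule sum_nonneg_eq_0_iff[OF A(1)]) (simp add: D_nonneg sum_nonneg)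
  also have "\<dots> \<longleftrightarrow> (\<forall>u\<in>A. \<forall>v\<in>B. D u v = 0)"
    by (intro ball_cong refl sum_nonneg_eq_0_iff[OF B]) (simp add: D_nonneg)
  also have "\<dots> \<longleftrightarrow> (\<forall>u\<in>A. \<forall>v\<in>B. a u v = 1)"
  proof
    assume D0: "\<forall>u\<in>A. \<forall>v\<in>B. D u v = 0"
    show "\<forall>u\<in>A. \<forall>v\<in>B. a u v = 1"
    proof (intro ballI)
      fix u v assume uv: "u \<in> A" "v \<in> B"
      have "a u v = r u * c v / m"
        using bspec[OF bspec[OF D0 uv(1)] uv(2)] r(2)[OF uv(1)] c(2)[OF uv(2)] by (simp add: D_def)
      moreover have "0 < r u * c v / m"
        using r(2)[OF uv(1)] c(2)[OF uv(2)] m by simp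
      ultimately show "a u v = 1"
        using a01[of u v] by auto
    qed
  next
    assume all1: "\<forall>u\<in>A. \<forall>v\<in>B. a u v = 1"
    have r_card: "r u = real (card B)" if "u \<in> A" for u
      using r(1)[OF that] all1 that by simp
    moreover have "c v = real (card A)" if "v \<in> B" for v
      using c(1)[OF that] all1 that by simp
    moreover have "m = real (card A) * real (card B)"
      using r_card by (simp add: m_def)
    ultimately show "\<forall>u\<in>A. \<forall>v\<in>B. D u v = 0"
      using all1 by (simp add: D_def)
  qed
  finally show "(\<Sum>u\<in>A. \<Sum>v\<in>B. a u v / (r u * c v)) = 1 \<longleftrightarrow>
      (\<forall>u\<in>A. \<forall>v\<in>B. a u v = 1)" .
qed

section \<open>The random walk on arcs\<close>

locale connected_simple_graph =
  fixes V :: "'a set" and E :: "'a \<Rightarrow> 'a \<Rightarrow> bool"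
  assumes simple: "simple_graph V E" and connected: "connected_graph V E" and has_edge: "edges E \<noteq> {}"
begin

definition neighbours :: "'a \<Rightarrow> 'a set" where
  "neighbours x = {y \<in> V. E x y}"

lemma finite_V: "finite V"
  using simple by (simp add: simple_graph_def)

lemma edge_in_V: "E u v \<Longrightarrow> u \<in> V \<and> v \<in> V"
  using simple by (simp add: simple_graph_def)

lemma edge_sym: "E u v \<Longrightarrow> E v u"
  using simple by (simp add: simple_graph_def)

lemma no_loop: "\<not> E u u"
  using simple by (simp add: simple_graph_def)

lemma finite_neighbours: "finite (neighbours x)"
  using finite_V by (simp add: neighbours_def)

lemma degree_eq_card_neighbours: "degree V E x = card (neighbours x)"
  by (simp add: degree_def neighbours_def)

lemma arcs_eq_Sigma: "arcs E = Sigma V neighbours"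
  by (auto simp: arcs_def neighbours_def dest: edge_in_V)

lemma finite_arcs: "finite (arcs E)"
  using finite_V finite_neighbours by (simp add: arcs_eq_Sigma)

lemma arc_head_in_V: "a \<in> arcs E \<Longrightarrow> snd a \<in> V"
  and arc_tail_in_V: "a \<in> arcs E \<Longrightarrow> fst a \<in> V"
  by (auto simp: arcs_def dest: edge_in_V)

lemma sum_arcs: "(\<Sum>a\<in>arcs E. F a) = (\<Sum>x\<in>V. \<Sum>y\<in>neighbours x. F (x, y))"
  using finite_V finite_neighbours by (simp add: arcs_eq_Sigma sum.Sigma)

lemma sum_neighbours_swap:
  "(\<Sum>x\<in>V. \<Sum>y\<in>neighbours x. g x y) = (\<Sum>x\<in>V. \<Sum>y\<in>neighbours x. g y x)"
proof -
  have "(\<Sum>a\<in>arcs E. g (fst a) (snd a)) = (\<Sum>a\<in>arcs E. g (snd a) (fst a))"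
    by (rule sum.reindex_bij_witness[of _ prod.swap prod.swap]) (auto simp: arcs_def intro: edge_sym)
  then show ?thesis
    by (simp add: sum_arcs)
qed

lemma arcs_nonempty: "arcs E \<noteq> {}"
  using has_edge by (auto simp: edges_def arcs_def)

lemma neighbours_nonempty:
  assumes "x \<in> V"
  shows "neighbours x \<noteq> {}"
proof -
  obtain u v where uv: "E u v"
    using has_edge by (auto simp: edges_def)
  with connected assms edge_in_V have "E\<^sup>*\<^sup>* x u"
    by (auto simp: connected_graph_def)
  then show ?thesis
  proof (cases rule: converse_rtranclpE)
    case base
    then show ?thesis using uv edge_in_V by (auto simp: neighbours_def)
  next
    case (step z)
    then show ?thesis using edge_in_V by (auto simp: neighbours_def)
  qed
qed

lemma degree_pos: "x \<in> V \<Longrightarrow> degree V E x > 0"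
  using neighbours_nonempty finite_neighbours by (simp add: degree_eq_card_neighbours card_gt_0_iff)

lemma arc_walk_arc:
  assumes "b \<in> arcs E"
  shows "arc_walk V E a b = (if snd a = fst b then 1 / real (degree V E (snd a)) else 0)"
  using assms by (auto simp: arc_walk_def arcs_def)

lemma matvec_arc_walk:
  assumes a: "a \<in> arcs E"
  shows "matvec_on (arcs E) (arc_walk V E) F a
    = (\<Sum>y\<in>neighbours (snd a). F (snd a, y)) / of_nat (degree V E (snd a))"
proof -
  have "matvec_on (arcs E) (arc_walk V E) F a
      = (\<Sum>x\<in>V. if x = snd a then (\<Sum>y\<in>neighbours x. F (x, y)) / of_nat (degree V E x) else 0)"
    unfolding matvec_on_def sum_arcs
  proof (rule sum.cong[OF refl])
    fix x
    have "(x, y) \<in> arcs E" if "y \<in> neighbours x" for y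
      using that by (simp add: arcs_def neighbours_def)
    then show "(\<Sum>y\<in>neighbours x. complex_of_real (arc_walk V E a (x, y)) * F (x, y))
        = (if x = snd a then (\<Sum>y\<in>neighbours x. F (x, y)) / of_nat (degree V E x) else 0)"
      by (cases "x = snd a") (simp_all add: arc_walk_arc sum_divide_distrib)
  qed
  also have "\<dots> = (\<Sum>y\<in>neighbours (snd a). F (snd a, y)) / of_nat (degree V E (snd a))"
    using arc_head_in_V[OF a] finite_V by (simp add: sum.delta')
  finally show ?thesis .
qed

lemma arc_walk_column_sum:
  assumes b: "b \<in> arcs E"
  shows "(\<Sum>a\<in>arcs E. arc_walk V E a b) = 1"
proof -
  have "(\<Sum>a\<in>arcs E. arc_walk V E a b)
      = (\<Sum>x\<in>V. \<Sum>y\<in>neighbours x. if y = fst b then 1 / real (degree V E (fst b)) else 0)"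
    unfolding sum_arcs using b by (intro sum.cong refl) (auto simp: arc_walk_arc)
  also have "\<dots> = (\<Sum>x\<in>V. if x \<in> neighbours (fst b) then 1 / real (degree V E (fst b)) else 0)"
    using finite_neighbours arc_tail_in_V[OF b]
    by (intro sum.cong refl) (auto simp: neighbours_def intro: edge_sym)
  also have "\<dots> = (\<Sum>x\<in>neighbours (fst b).
      if x \<in> neighbours (fst b) then 1 / real (degree V E (fst b)) else 0)"
    using finite_V by (intro sum.mono_neutral_right) (auto simp: neighbours_def)
  also have "\<dots> = 1"
    using degree_pos[OF arc_tail_in_V[OF b]] by (simp add: degree_eq_card_neighbours)
  finally show ?thesis .
qed

lemma sum_matvec_arc_walk:
  "(\<Sum>a\<in>arcs E. matvec_on (arcs E) (arc_walk V E) F a) = (\<Sum>b\<in>arcs E. F b)"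
proof -
  have "(\<Sum>a\<in>arcs E. matvec_on (arcs E) (arc_walk V E) F a)
      = (\<Sum>b\<in>arcs E. complex_of_real (\<Sum>a\<in>arcs E. arc_walk V E a b) * F b)"
    unfolding matvec_on_def by (subst sum.swap) (simp add: sum_distrib_right)
  then show ?thesis
    by (simp add: arc_walk_column_sum)
qed

lemma harmonic_imp_constant:
  fixes h :: "'a \<Rightarrow> real"
  assumes harmonic: "\<And>x. x \<in> V \<Longrightarrow> real (degree V E x) * h x = (\<Sum>y\<in>neighbours x. h y)"
    and x: "x \<in> V" and y: "y \<in> V"
  shows "h x = h y"
proof -
  have "Max (h ` V) \<in> h ` V"
    using finite_V x by (intro Max_in) auto
  then obtain x0 where x0_max: "Max (h ` V) = h x0" and x0: "x0 \<in> V"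
    by (rule imageE)
  have max: "h z \<le> h x0" if "z \<in> V" for z
    using finite_V that by (simp flip: x0_max)
  have "h z = h x0" if "E\<^sup>*\<^sup>* x0 z" for z
    using that
  proof (induction rule: rtranclp_induct)
    case (step z w)
    have z: "z \<in> V"
      using edge_in_V[OF step.hyps(2)] by blast
    have "(\<Sum>u\<in>neighbours z. h x0 - h u) = real (degree V E z) * (h x0 - h z)"
      using harmonic[OF z] by (simp add: sum_subtractf degree_eq_card_neighbours algebra_simps)
    then have "(\<Sum>u\<in>neighbours z. h x0 - h u) = 0"
      using step.IH by simp
    moreover have "0 \<le> h x0 - h u" if "u \<in> neighbours z" for u
      using max that by (simp add: neighbours_def)
    ultimately have "\<forall>u\<in>neighbours z. h x0 - h u = 0"
      using sum_nonneg_eq_0_iff[OF finite_neighbours, where f = "\<lambda>u. h x0 - h u"] by blast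
    moreover have "w \<in> neighbours z"
      using step.hyps(2) edge_in_V by (simp add: neighbours_def)
    ultimately show ?case
      by simp
  qed simp
  moreover have "E\<^sup>*\<^sup>* x0 x" and "E\<^sup>*\<^sup>* x0 y"
    using connected x0 x y unfolding connected_graph_def by blast+
  ultimately have "h x = h x0" and "h y = h x0"
    by blast+
  then show ?thesis
    by simp
qed

lemma eigenfunction_through_heads:
  assumes eig: "\<forall>a\<in>arcs E. matvec_on (arcs E) (arc_walk V E) F a = \<rho> * F a" and \<rho>: "\<rho> \<noteq> 0"
  obtains h where "\<forall>a\<in>arcs E. F a = h (snd a)"
    and "\<And>x. x \<in> V \<Longrightarrow> \<rho> * of_nat (degree V E x) * h x = (\<Sum>y\<in>neighbours x. h y)"
proof
  define h where "h x = (\<Sum>y\<in>neighbours x. F (x, y)) / (of_nat (degree V E x) * \<rho>)" for x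
  show heads: "\<forall>a\<in>arcs E. F a = h (snd a)"
  proof
    fix a assume a: "a \<in> arcs E"
    have "\<rho> * F a = (\<Sum>y\<in>neighbours (snd a). F (snd a, y)) / of_nat (degree V E (snd a))"
      using eig a by (simp add: matvec_arc_walk)
    then show "F a = h (snd a)"
      using \<rho> degree_pos[OF arc_head_in_V[OF a]] by (simp add: h_def field_simps)
  qed
  fix x assume x: "x \<in> V"
  have "\<rho> * of_nat (degree V E x) * h x = (\<Sum>y\<in>neighbours x. F (x, y))"
    using \<rho> degree_pos[OF x] by (simp add: h_def)
  also have "\<dots> = (\<Sum>y\<in>neighbours x. h y)"
    using heads by (intro sum.cong refl) (auto simp: neighbours_def arcs_def)
  finally show "\<rho> * of_nat (degree V E x) * h x = (\<Sum>y\<in>neighbours x. h y)" .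
qed

lemma norm_adjacency_form_le:
  fixes h :: "'a \<Rightarrow> complex"
  shows "cmod (\<Sum>x\<in>V. \<Sum>y\<in>neighbours x. cnj (h x) * h y)
    \<le> (\<Sum>x\<in>V. \<Sum>y\<in>neighbours x. (cmod (h x))\<^sup>2)"
proof -
  have "cmod (\<Sum>x\<in>V. \<Sum>y\<in>neighbours x. cnj (h x) * h y)
      \<le> (\<Sum>x\<in>V. \<Sum>y\<in>neighbours x. cmod (h x) * cmod (h y))"
    by (intro order_trans[OF norm_sum] sum_mono order_trans[OF norm_sum]) (simp add: norm_mult)
  also have "\<dots> \<le> (\<Sum>x\<in>V. \<Sum>y\<in>neighbours x. ((cmod (h x))\<^sup>2 + (cmod (h y))\<^sup>2) / 2)"
  proof (intro sum_mono)
    fix x y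
    show "cmod (h x) * cmod (h y) \<le> ((cmod (h x))\<^sup>2 + (cmod (h y))\<^sup>2) / 2"
      using sum_squares_bound[of "cmod (h x)" "cmod (h y)"] by simp
  qed
  also have "\<dots> = (\<Sum>x\<in>V. \<Sum>y\<in>neighbours x. (cmod (h x))\<^sup>2)"
    using sum_neighbours_swap[of "\<lambda>x y. (cmod (h y))\<^sup>2"]
    by (simp add: sum.distrib add_divide_distrib flip: sum_divide_distrib)
  finally show ?thesis .
qed

lemma vertex_walk_eigenvalue_real_bounded:
  fixes h :: "'a \<Rightarrow> complex"
  assumes eig: "\<And>x. x \<in> V \<Longrightarrow> \<rho> * of_nat (degree V E x) * h x = (\<Sum>y\<in>neighbours x. h y)"
    and x0: "x0 \<in> V" and h0: "h x0 \<noteq> 0"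
  shows "Im \<rho> = 0 \<and> cmod \<rho> \<le> 1"
proof -
  define D where "D = (\<Sum>x\<in>V. \<Sum>y\<in>neighbours x. (cmod (h x))\<^sup>2)"
  define Q where "Q = (\<Sum>x\<in>V. \<Sum>y\<in>neighbours x. cnj (h x) * h y)"
  have "0 < (\<Sum>y\<in>neighbours x0. (cmod (h x0))\<^sup>2)"
    using neighbours_nonempty[OF x0] finite_neighbours h0 by (simp add: card_gt_0_iff)
  also have "\<dots> \<le> D"
    unfolding D_def by (rule member_le_sum[OF x0 _ finite_V]) (simp add: sum_nonneg)
  finally have D: "0 < D" .
  have D_complex: "complex_of_real D = (\<Sum>x\<in>V. \<Sum>y\<in>neighbours x. cnj (h x) * h x)"
    unfolding D_def by (simp add: complex_norm_square mult.commute del: of_real_power)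
  have "Q = (\<Sum>x\<in>V. cnj (h x) * (\<Sum>y\<in>neighbours x. h y))"
    unfolding Q_def by (simp add: sum_distrib_left)
  also have "\<dots> = (\<Sum>x\<in>V. \<rho> * (of_nat (card (neighbours x)) * (cnj (h x) * h x)))"
    by (intro sum.cong refl) (simp add: eig[symmetric] degree_eq_card_neighbours mult_ac)
  also have "\<dots> = \<rho> * of_real D"
    unfolding D_complex by (simp add: sum_distrib_left)
  finally have QD: "Q = \<rho> * of_real D" .
  have "cnj Q = Q"
    unfolding Q_def by (subst sum_neighbours_swap) (simp add: mult.commute)
  then have "cnj \<rho> = \<rho>"
    using QD D by simp
  moreover have "cmod \<rho> * D \<le> D"
    using norm_adjacency_form_le[of h, folded Q_def D_def] QD D by (simp add: norm_mult)
  ultimately show ?thesis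
    using D Reals_cnj_iff complex_is_Real_iff by auto
qed

abbreviation arc_spectrum :: "complex multiset" where
  "arc_spectrum \<equiv> eigenvalues_on (arcs E) (arc_walk V E)"

lemma arc_spectrum_real_bounded:
  assumes "\<rho> \<in># arc_spectrum"
  shows "Im \<rho> = 0 \<and> cmod \<rho> \<le> 1"
proof (cases "\<rho> = 0")
  case False
  obtain F a0 where a0: "a0 \<in> arcs E" "F a0 \<noteq> 0"
    and eig: "\<forall>a\<in>arcs E. matvec_on (arcs E) (arc_walk V E) F a = \<rho> * F a"
    using assms in_eigenvalues_on_iff[OF finite_arcs] by blast
  obtain h where heads: "\<forall>a\<in>arcs E. F a = h (snd a)"
    and vertex: "\<And>x. x \<in> V \<Longrightarrow> \<rho> * of_nat (degree V E x) * h x = (\<Sum>y\<in>neighbours x. h y)"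
    using eigenfunction_through_heads[OF eig False] by blast
  show ?thesis
    using vertex_walk_eigenvalue_real_bounded[OF vertex arc_head_in_V[OF a0(1)]] heads a0 by simp
qed simp

lemma fixed_function_constant:
  assumes fixed: "\<forall>a\<in>arcs E. matvec_on (arcs E) (arc_walk V E) F a = F a"
    and a: "a \<in> arcs E" and b: "b \<in> arcs E"
  shows "F a = F b"
proof -
  obtain h where heads: "\<forall>a\<in>arcs E. F a = h (snd a)"
    and harmonic: "\<And>x. x \<in> V \<Longrightarrow> 1 * of_nat (degree V E x) * h x = (\<Sum>y\<in>neighbours x. h y)"
    using eigenfunction_through_heads[of F 1] fixed by auto
  have re: "real (degree V E x) * Re (h x) = (\<Sum>y\<in>neighbours x. Re (h y))"
    and im: "real (degree V E x) * Im (h x) = (\<Sum>y\<in>neighbours x. Im (h y))" if "x \<in> V" for x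
    using arg_cong[OF harmonic[OF that], of Re] arg_cong[OF harmonic[OF that], of Im] by simp_all
  have "Re (h x) = Re (h y)" and "Im (h x) = Im (h y)" if "x \<in> V" "y \<in> V" for x y
    using harmonic_imp_constant[of "\<lambda>x. Re (h x)", OF re that]
      harmonic_imp_constant[of "\<lambda>x. Im (h x)", OF im that] by simp_all
  then show ?thesis
    using heads a b arc_head_in_V by (simp add: complex_eq_iff)
qed

lemma one_in_arc_spectrum: "1 \<in># arc_spectrum"
proof -
  obtain u v where "(u, v) \<in> arcs E"
    using arcs_nonempty by auto
  moreover have "matvec_on (arcs E) (arc_walk V E) (\<lambda>_. 1) a = 1" if "a \<in> arcs E" for a
    using degree_pos[OF arc_head_in_V[OF that]]
    by (simp add: matvec_arc_walk[OF that] degree_eq_card_neighbours)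
  ultimately show ?thesis
    unfolding in_eigenvalues_on_iff[OF finite_arcs] by (intro exI[of _ "\<lambda>_. 1"]) auto
qed

lemma minus_one_in_arc_spectrum:
  assumes "bipartite V E"
  shows "-1 \<in># arc_spectrum"
proof -
  obtain A B where AB: "A \<union> B = V" "A \<inter> B = {}"
    and across: "\<forall>u v. E u v \<longrightarrow> (u \<in> A \<and> v \<in> B) \<or> (u \<in> B \<and> v \<in> A)"
    using assms unfolding bipartite_def by blast
  define F where "F a = (if fst a \<in> A then 1 else - 1 :: complex)" for a :: "'a \<times> 'a"
  obtain u v where "(u, v) \<in> arcs E"
    using arcs_nonempty by auto
  moreover have "matvec_on (arcs E) (arc_walk V E) F a = - F a" if a: "a \<in> arcs E" for a
  proof -
    have "E (fst a) (snd a)"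
      using a by (cases a) (simp add: arcs_def)
    then have "fst a \<in> A \<longleftrightarrow> snd a \<notin> A"
      using across AB edge_in_V by blast
    then show ?thesis
      using degree_pos[OF arc_head_in_V[OF a]]
      by (simp add: matvec_arc_walk[OF a] F_def degree_eq_card_neighbours)
  qed
  ultimately show ?thesis
    unfolding in_eigenvalues_on_iff[OF finite_arcs] by (intro exI[of _ F]) (auto simp: F_def)
qed

(* A double eigenvalue 1 gives a Jordan chain F, G. F is fixed, hence constant; summing the
   chain relation over all arcs (P is doubly stochastic) forces beta = 0, so G is constant too,
   contradicting the independence of F and G. *)
lemma count_one_arc_spectrum: "count arc_spectrum 1 = 1"
proof (rule ccontr)
  assume "count arc_spectrum 1 \<noteq> 1"
  moreover have "0 < count arc_spectrum 1"
    using one_in_arc_spectrum by simp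
  ultimately have "2 \<le> count arc_spectrum 1"
    by linarith
  then obtain F G \<beta> where F: "\<forall>a\<in>arcs E. matvec_on (arcs E) (arc_walk V E) F a = 1 * F a"
    and G: "\<forall>a\<in>arcs E. matvec_on (arcs E) (arc_walk V E) G a = 1 * G a + \<beta> * F a"
    and indep: "\<And>c d. \<forall>a\<in>arcs E. c * F a + d * G a = 0 \<Longrightarrow> c = 0 \<and> d = 0"
    using double_eigenvalue_on_chain[OF finite_arcs] by metis
  obtain a0 where a0: "a0 \<in> arcs E"
    using arcs_nonempty by auto
  define c where "c = F a0"
  have F_c: "F a = c" if "a \<in> arcs E" for a
    using fixed_function_constant[of F a a0] F that a0 by (simp add: c_def)
  have "c \<noteq> 0"
    using indep[of 1 0] F_c by auto
  have "(\<Sum>a\<in>arcs E. G a) = (\<Sum>a\<in>arcs E. G a + \<beta> * c)"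
    using sum_matvec_arc_walk[of G] G F_c by simp
  then have "\<beta> * c = 0"
    using finite_arcs arcs_nonempty by (simp add: sum.distrib)
  then have "\<forall>a\<in>arcs E. matvec_on (arcs E) (arc_walk V E) G a = G a"
    using G F_c \<open>c \<noteq> 0\<close> by simp
  then have G_c: "G a = G a0" if "a \<in> arcs E" for a
    using fixed_function_constant a0 that by blast
  have "\<forall>a\<in>arcs E. G a0 * F a + (- c) * G a = 0"
    using F_c G_c by simp
  then show False
    using indep[of "G a0" "- c"] \<open>c \<noteq> 0\<close> by simp
qed

lemma card_arcs: "card (arcs E) = 2 * card (edges E)"
proof -
  have edges: "edges E = (\<lambda>a. {fst a, snd a}) ` arcs E"
    by (auto simp: edges_def arcs_def image_iff) blast+
  have fibre: "card {a \<in> arcs E. {fst a, snd a} = e} = 2" if edge: "e \<in> edges E" for e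
  proof -
    obtain u v where e: "e = {u, v}" and uv: "E u v"
      using edge by (auto simp: edges_def)
    have "{a \<in> arcs E. {fst a, snd a} = e} = {(u, v), (v, u)}"
      using uv e by (auto simp: arcs_def doubleton_eq_iff intro: edge_sym)
    moreover have "u \<noteq> v"
      using uv no_loop by blast
    ultimately show ?thesis
      by simp
  qed
  have "card (arcs E) = (\<Sum>e\<in>edges E. of_nat (card {a \<in> arcs E. {fst a, snd a} = e}) * 1)"
    using sum_fun_comp[OF finite_arcs, where g = "\<lambda>a. {fst a, snd a}" and R = "edges E"
        and f = "\<lambda>_. 1::nat"] finite_arcs edges by simp
  also have "\<dots> = 2 * card (edges E)"
    using fibre by simp
  finally show ?thesis .
qed

lemma sum_arc_spectrum: "sum_mset arc_spectrum = 0"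
proof -
  have "arc_walk V E a a = 0" for a
    using no_loop by (auto simp: arc_walk_def)
  then show ?thesis
    by (simp add: sum_eigenvalues_on[OF finite_arcs])
qed

definition randic_arc_sum :: real where
  "randic_arc_sum = (\<Sum>a\<in>arcs E. 1 / (real (degree V E (fst a)) * real (degree V E (snd a))))"

lemma arc_walk_return:
  assumes a: "a \<in> arcs E"
  shows "(\<Sum>b\<in>arcs E. arc_walk V E a b * arc_walk V E b a)
    = 1 / (real (degree V E (fst a)) * real (degree V E (snd a)))"
proof -
  have "(\<Sum>b\<in>arcs E. arc_walk V E a b * arc_walk V E b a)
      = (\<Sum>b\<in>arcs E. if b = prod.swap a then 1 / real (degree V E (snd a)) * (1 / real (degree V E (fst a))) else 0)"
    using a by (intro sum.cong refl) (auto simp: arc_walk_arc prod_eq_iff)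
  also have "\<dots> = 1 / (real (degree V E (fst a)) * real (degree V E (snd a)))"
    using a finite_arcs by (simp add: arcs_def edge_sym split_beta)
  finally show ?thesis .
qed

lemma sum_squares_arc_spectrum:
  "(\<Sum>\<rho>\<in>#arc_spectrum. \<rho>\<^sup>2) = complex_of_real randic_arc_sum"
  by (simp add: sum_squares_eigenvalues_on[OF finite_arcs] arc_walk_return randic_arc_sum_def)

lemma randic_arc_sum_bipartition:
  assumes AB: "A \<union> B = V" "A \<inter> B = {}"
    and across: "\<forall>u v. E u v \<longrightarrow> (u \<in> A \<and> v \<in> B) \<or> (u \<in> B \<and> v \<in> A)"
  shows "2 \<le> randic_arc_sum" and "randic_arc_sum = 2 \<longleftrightarrow> (\<forall>u\<in>A. \<forall>v\<in>B. E u v)"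
proof -
  define d where "d x = real (degree V E x)" for x
  define a where "a u v = (if E u v then 1 else 0 :: real)" for u v
  have fin: "finite A" "finite B"
    using AB finite_V by (auto intro: finite_subset)
  have nbrs_A: "neighbours x = {y \<in> B. E x y}" if "x \<in> A" for x
    using that AB across edge_in_V by (auto simp: neighbours_def)
  have nbrs_B: "neighbours x = {y \<in> A. E y x}" if "x \<in> B" for x
    using that AB across edge_in_V by (auto simp: neighbours_def intro: edge_sym)
  have sum_A: "(\<Sum>y\<in>neighbours x. g y) = (\<Sum>y\<in>B. a x y * g y)" if "x \<in> A" for x g
    unfolding nbrs_A[OF that] sum.inter_filter[OF fin(2)] by (intro sum.cong) (simp_all add: a_def)
  have sum_B: "(\<Sum>y\<in>neighbours x. g y) = (\<Sum>y\<in>A. a y x * g y)" if "x \<in> B" for x g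
    unfolding nbrs_B[OF that] sum.inter_filter[OF fin(1)] by (intro sum.cong) (simp_all add: a_def)
  define S where "S = (\<Sum>u\<in>A. \<Sum>v\<in>B. a u v / (d u * d v))"
  have "randic_arc_sum = (\<Sum>x\<in>A \<union> B. \<Sum>y\<in>neighbours x. 1 / (d x * d y))"
    unfolding randic_arc_sum_def sum_arcs d_def AB(1) by simp
  also have "\<dots> = S + (\<Sum>x\<in>B. \<Sum>y\<in>A. a y x / (d y * d x))"
    using fin AB(2) by (simp add: sum.union_disjoint sum_A sum_B S_def mult.commute)
  also have "\<dots> = 2 * S"
    unfolding S_def by (subst sum.swap) (simp add: mult.commute)
  finally have randic_S: "randic_arc_sum = 2 * S" .
  obtain u0 v0 where "E u0 v0"
    using has_edge by (auto simp: edges_def)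
  then have "A \<noteq> {}"
    using across by blast
  have a01: "a u v = 0 \<or> a u v = 1" for u v
    by (simp add: a_def)
  have deg_A: "d x = (\<Sum>y\<in>B. a x y)" if "x \<in> A" for x
    using sum_A[OF that, of "\<lambda>_. 1"] by (simp add: d_def degree_eq_card_neighbours)
  have deg_B: "d y = (\<Sum>x\<in>A. a x y)" if "y \<in> B" for y
    using sum_B[OF that, of "\<lambda>_. 1"] by (simp add: d_def degree_eq_card_neighbours)
  have pos: "0 < d x" if "x \<in> A \<union> B" for x
    using degree_pos that AB(1) by (simp add: d_def)
  note normalized = zero_one_matrix_normalized_sum[OF fin(1) \<open>A \<noteq> {}\<close> fin(2) a01 deg_A _ deg_B,
      folded S_def]
  have "(\<forall>u\<in>A. \<forall>v\<in>B. a u v = 1) \<longleftrightarrow> (\<forall>u\<in>A. \<forall>v\<in>B. E u v)"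
    by (simp add: a_def)
  then show "2 \<le> randic_arc_sum" and "randic_arc_sum = 2 \<longleftrightarrow> (\<forall>u\<in>A. \<forall>v\<in>B. E u v)"
    using normalized pos randic_S by auto
qed

lemma randic_arc_sum_bipartite:
  assumes "bipartite V E"
  shows "2 \<le> randic_arc_sum" and "randic_arc_sum = 2 \<longleftrightarrow> complete_bipartite V E"
proof -
  obtain A B where AB: "A \<union> B = V" "A \<inter> B = {}"
    and across: "\<forall>u v. E u v \<longrightarrow> (u \<in> A \<and> v \<in> B) \<or> (u \<in> B \<and> v \<in> A)"
    using assms unfolding bipartite_def by blast
  show "2 \<le> randic_arc_sum"
    by (rule randic_arc_sum_bipartition(1)[OF AB across])
  show "randic_arc_sum = 2 \<longleftrightarrow> complete_bipartite V E"
  proof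
    assume "randic_arc_sum = 2"
    then have "\<forall>u\<in>A. \<forall>v\<in>B. E u v"
      using randic_arc_sum_bipartition(2)[OF AB across] by blast
    then have iff: "E u v \<longleftrightarrow> (u \<in> A \<and> v \<in> B) \<or> (u \<in> B \<and> v \<in> A)" for u v
      using across edge_sym[of v u] by blast
    obtain u0 v0 where "E u0 v0"
      using has_edge by (auto simp: edges_def)
    then have "A \<noteq> {}" "B \<noteq> {}"
      using across by blast+
    then show "complete_bipartite V E"
      unfolding complete_bipartite_def using AB iff by blast
  next
    assume "complete_bipartite V E"
    then obtain A' B' where AB': "A' \<union> B' = V" "A' \<inter> B' = {}"
      and iff: "\<forall>u\<in>V. \<forall>v\<in>V. E u v \<longleftrightarrow> (u \<in> A' \<and> v \<in> B') \<or> (u \<in> B' \<and> v \<in> A')"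
      unfolding complete_bipartite_def by blast
    have "\<forall>u v. E u v \<longrightarrow> (u \<in> A' \<and> v \<in> B') \<or> (u \<in> B' \<and> v \<in> A')"
      using iff edge_in_V by blast
    moreover have "\<forall>u\<in>A'. \<forall>v\<in>B'. E u v"
      using iff AB' by blast
    ultimately show "randic_arc_sum = 2"
      using randic_arc_sum_bipartition(2)[OF AB'] by blast
  qed
qed

definition real_arc_spectrum :: "real multiset" where
  "real_arc_spectrum = image_mset Re arc_spectrum"

lemma arc_spectrum_of_real: "arc_spectrum = image_mset complex_of_real real_arc_spectrum"
  unfolding real_arc_spectrum_def multiset.map_comp
  by (rule multiset.map_ident_strong[symmetric]) (simp add: arc_spectrum_real_bounded complex_eq_iff)

lemma real_arc_spectrum_bounds:
  assumes "r \<in># real_arc_spectrum"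
  shows "-1 \<le> r \<and> r \<le> 1"
proof -
  obtain \<rho> where "\<rho> \<in># arc_spectrum" and "r = Re \<rho>"
    using assms by (auto simp: real_arc_spectrum_def)
  then show ?thesis
    using arc_spectrum_real_bounded[of \<rho>] abs_Re_le_cmod[of \<rho>] by linarith
qed

lemma count_one_real_arc_spectrum: "count real_arc_spectrum 1 = 1"
proof -
  have "count (image_mset complex_of_real R) (complex_of_real x) = count R x" for R x
    by (induction R) auto
  then show ?thesis
    using count_one_arc_spectrum arc_spectrum_of_real by (metis of_real_1)
qed

lemma minus_one_in_real_arc_spectrum: "bipartite V E \<Longrightarrow> -1 \<in># real_arc_spectrum"
  using minus_one_in_arc_spectrum by (force simp: real_arc_spectrum_def)

lemma sum_real_arc_spectrum: "sum_mset real_arc_spectrum = 0"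
proof -
  have Re_sum: "Re (sum_mset M) = sum_mset (image_mset Re M)" for M
    by (induction M) auto
  show ?thesis
    unfolding real_arc_spectrum_def Re_sum[symmetric] sum_arc_spectrum by simp
qed

lemma sum_squares_real_arc_spectrum: "(\<Sum>r\<in>#real_arc_spectrum. r\<^sup>2) = randic_arc_sum"
proof -
  have of_real_sum_squares:
    "complex_of_real (\<Sum>r\<in>#R. r\<^sup>2) = (\<Sum>\<rho>\<in>#image_mset complex_of_real R. \<rho>\<^sup>2)" for R
    by (induction R) auto
  have "complex_of_real (\<Sum>r\<in>#real_arc_spectrum. r\<^sup>2) = complex_of_real randic_arc_sum"
    using sum_squares_arc_spectrum unfolding arc_spectrum_of_real of_real_sum_squares .
  then show ?thesis
    by (simp only: of_real_eq_iff)
qed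

lemma kemeny_edge_real_arc_spectrum:
  "kemeny_edge V E = (\<Sum>r\<in>#real_arc_spectrum - {#1#}. 1 / (1 - r))"
proof -
  have "{#1#} \<subseteq># real_arc_spectrum"
    using count_one_real_arc_spectrum by (simp add: subseteq_mset_def)
  then have "arc_spectrum - {#1#} = image_mset complex_of_real (real_arc_spectrum - {#1#})"
    using image_mset_Diff[of "{#1#}" real_arc_spectrum complex_of_real] arc_spectrum_of_real by simp
  moreover have "Re (1 / (1 - complex_of_real r)) = 1 / (1 - r)" for r
    by (metis Re_complex_of_real of_real_1 of_real_diff of_real_divide)
  then have "Re (\<Sum>\<rho>\<in>#image_mset complex_of_real R. 1 / (1 - \<rho>)) = (\<Sum>r\<in>#R. 1 / (1 - r))" for R
    by (induction R) simp_all
  ultimately show ?thesis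
    unfolding kemeny_edge_def kemeny_def by simp
qed

end

theorem lemma4p3:
  fixes V :: "'a set" and E :: "'a \<Rightarrow> 'a \<Rightarrow> bool"
  assumes "simple_graph V E" and "connected_graph V E" and "bipartite V E"
    and "edges E \<noteq> {}"
  shows "kemeny_edge V E \<ge> 2 * real (card (edges E)) - 3 / 2
    \<and> (kemeny_edge V E = 2 * real (card (edges E)) - 3 / 2 \<longleftrightarrow> complete_bipartite V E)"
proof -
  interpret connected_simple_graph V E
    using assms(1,2,4) by unfold_locales
  have "size real_arc_spectrum = 2 * card (edges E)"
    using size_eigenvalues_on[OF finite_arcs] card_arcs by (simp add: real_arc_spectrum_def)
  moreover note kemeny_sum_lower_bound[OF real_arc_spectrum_bounds count_one_real_arc_spectrum
      minus_one_in_real_arc_spectrum[OF assms(3)] sum_real_arc_spectrum]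
  moreover note randic_arc_sum_bipartite[OF assms(3)]
  ultimately show ?thesis
    unfolding kemeny_edge_real_arc_spectrum sum_squares_real_arc_spectrum by simp
qed

end
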